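(* Let $F$ be an infinite field and let $n\geq 2$ be an integer. If $p\in F[x]$ is a nonconstant polynomial, then there exist matrices $A,B\in \mathrm{M}_n(F)$ such that $p(AB)-p(BA)$ is algebraic of degree $n$ over $F$.
   Context: An element $a$ of a ring with center $Z$ is algebraic of degree $n$ over $Z$ if there is a polynomial $f\in Z[x]$ of degree $n$ with $f(a)=0$ and no nonzero polynomial of smaller degree in $Z[x]$ annihilates $a$. *)

theory Defs
  imports "HOL-Analysis.Analysis" "HOL-Computational_Algebra.Polynomial"
begin

primrec matpow :: "'a::semiring_1^'n^'n \<Rightarrow> nat \<Rightarrow> 'a^'n^'n" where
  "matpow A 0 = mat 1"
| "matpow A (Suc k) = A ** matpow A k"

definition poly_mat :: "'a::comm_ring_1 poly \<Rightarrow> 'a^'n^'n \<Rightarrow> 'a^'n^'n" where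
  "poly_mat p A = (\<Sum>i\<le>degree p. mat (coeff p i) ** matpow A i)"

text \<open>A matrix is algebraic of degree d over the center (the scalar matrices,
  identified with the field): some nonzero polynomial of degree d annihilates it,
  and no nonzero polynomial of smaller degree does.\<close>
definition algebraic_of_degree :: "'a::field^'n^'n \<Rightarrow> nat \<Rightarrow> bool" where
  "algebraic_of_degree A d \<longleftrightarrow>
     (\<exists>f::'a poly. f \<noteq> 0 \<and> degree f = d \<and> poly_mat f A = 0) \<and>
     (\<forall>g::'a poly. g \<noteq> 0 \<and> degree g < d \<longrightarrow> poly_mat g A \<noteq> 0)"

end

theory Submission
  imports Defs
begin

text \<open>Enumerate the index type by positions 0, ..., n-1 and let N be the nilpotent shift
  along this enumeration. Take A = 1 + N, which is invertible, and B = A^-1 D for a diagonal D.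
  Then A B = D and B A = A^-1 D A, so p(AB) - p(BA) = E - A^-1 E A with E = p(D) diagonal.
  This difference is strictly upper triangular, and its superdiagonal entries are differences
  of consecutive diagonal entries of E. Choosing the entries of D to alternate between 0 and a
  point x with p(x) \<noteq> p(0), which exists because F is infinite, makes all of them nonzero.
  Such a matrix is nilpotent of index exactly n, and a nilpotent matrix of index n is
  annihilated by X^n but by no nonzero polynomial of smaller degree.\<close>

lemma sum_eq_single:
  assumes "finite A" "a \<in> A" "\<And>x. x \<in> A \<Longrightarrow> x \<noteq> a \<Longrightarrow> f x = 0"
  shows "sum f A = (f a :: 'b::comm_monoid_add)"
  using assms by (subst sum.mono_neutral_right[of A "{a}"]) auto

lemma matrix_matrix_mult_nth:
  "(X ** Y) $ i $ j = (\<Sum>k\<in>UNIV. X $ i $ k * Y $ k $ j)"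
  by (simp add: matrix_matrix_mult_def)

lemma matrix_add_rdistrib:
  fixes A B :: "'a::semiring_1^'n^'m" and C :: "'a^'p^'n"
  shows "(A + B) ** C = A ** C + B ** C"
  by (simp add: vec_eq_iff matrix_matrix_mult_nth distrib_right sum.distrib)

lemma matrix_mul_sum_left:
  fixes f :: "'i \<Rightarrow> 'a::semiring_1^'n^'m" and Y :: "'a^'p^'n"
  shows "sum f S ** Y = (\<Sum>i\<in>S. f i ** Y)"
  by (induction S rule: infinite_finite_induct) (auto simp: matrix_add_rdistrib)

lemma matrix_mul_sum_right:
  fixes f :: "'i \<Rightarrow> 'a::semiring_1^'p^'n" and Y :: "'a^'n^'m"
  shows "Y ** sum f S = (\<Sum>i\<in>S. Y ** f i)"
  by (induction S rule: infinite_finite_induct) (auto simp: matrix_add_ldistrib)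

definition diag_mat :: "('n \<Rightarrow> 'a::zero) \<Rightarrow> 'a^'n^'n" where
  "diag_mat d = (\<chi> i j. if i = j then d i else 0)"

lemma diag_mat_nth [simp]: "diag_mat d $ i $ j = (if i = j then d i else 0)"
  by (simp add: diag_mat_def)

lemma mat_eq_diag_mat: "mat c = diag_mat (\<lambda>_. c)"
  by (simp add: mat_def diag_mat_def)

lemma diag_mat_mult_nth:
  fixes X :: "'a::semiring_1^'m^'n"
  shows "(diag_mat d ** X) $ i $ j = d i * X $ i $ j"
  by (simp add: matrix_matrix_mult_nth diag_mat_def if_distrib if_distribR cong: if_cong)

lemma matrix_mult_diag_mat_nth:
  fixes X :: "'a::semiring_1^'n^'m"
  shows "(X ** diag_mat d) $ i $ j = X $ i $ j * d j"
  by (simp add: matrix_matrix_mult_nth diag_mat_def if_distrib if_distribR cong: if_cong)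

lemma mat_mult_commute:
  fixes X :: "'a::comm_semiring_1^'n^'n"
  shows "mat c ** X = X ** mat c"
  by (simp add: vec_eq_iff mat_eq_diag_mat diag_mat_mult_nth matrix_mult_diag_mat_nth mult.commute)

lemma diag_mat_mult_diag_mat:
  fixes d :: "'n::finite \<Rightarrow> 'a::semiring_1"
  shows "diag_mat d ** diag_mat d' = diag_mat (\<lambda>i. d i * d' i)"
  by (simp add: vec_eq_iff diag_mat_mult_nth)

lemma matpow_diag_mat: "matpow (diag_mat d) k = diag_mat (\<lambda>i. d i ^ k)"
  by (induction k) (simp_all add: mat_eq_diag_mat diag_mat_mult_diag_mat)

lemma poly_mat_diag_mat:
  fixes d :: "'n::finite \<Rightarrow> 'a::comm_ring_1"
  shows "poly_mat p (diag_mat d) = diag_mat (\<lambda>i. poly p (d i))"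
  by (simp add: vec_eq_iff poly_mat_def matpow_diag_mat mat_eq_diag_mat diag_mat_mult_nth
      poly_altdef)

lemma matpow_add: "matpow A (i + k) = matpow A i ** matpow A k"
  by (induction i) (simp_all add: matrix_mul_assoc)

lemma matpow_eq_0_mono:
  assumes "matpow A k = 0" "k \<le> l"
  shows "matpow A l = 0"
  using assms matpow_add[of A "l - k" k] by simp

lemma matpow_similar:
  fixes A C X :: "'a::semiring_1^'n^'n"
  assumes "C ** A = mat 1" "A ** C = mat 1"
  shows "matpow (C ** X ** A) k = C ** matpow X k ** A"
proof (induction k)
  case (Suc k)
  have "matpow (C ** X ** A) (Suc k) = C ** X ** (A ** C) ** matpow X k ** A"
    using Suc by (simp add: matrix_mul_assoc)
  then show ?case
    using assms by (simp add: matrix_mul_assoc)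
qed (use assms in simp)

lemma poly_mat_similar:
  fixes A C X :: "'a::comm_ring_1^'n^'n"
  assumes "C ** A = mat 1" "A ** C = mat 1"
  shows "poly_mat p (C ** X ** A) = C ** poly_mat p X ** A"
proof -
  have "mat c ** (C ** Y ** A) = C ** (mat c ** Y) ** A" for c Y
    by (metis mat_mult_commute matrix_mul_assoc)
  then show ?thesis
    unfolding poly_mat_def matpow_similar[OF assms] matrix_mul_sum_left matrix_mul_sum_right
    by simp
qed

lemma poly_mat_monom: "poly_mat (monom c k) X = mat c ** matpow X k"
proof -
  have "mat (coeff (monom c k) i) ** matpow X i = (if i = k then mat c ** matpow X k else 0)" for i
    by (simp add: coeff_monom)
  then show ?thesis
    by (cases "c = 0") (simp_all add: poly_mat_def degree_monom_eq)
qed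

lemma poly_mat_mult_matpow:
  "poly_mat g X ** matpow X k = (\<Sum>i\<le>degree g. mat (coeff g i) ** matpow X (i + k))"
  by (simp add: poly_mat_def matrix_mul_sum_left matpow_add matrix_mul_assoc)

lemma algebraic_of_degree_nilpotent:
  fixes U :: "'a::field^'n^'n"
  assumes nil: "matpow U (Suc m) = 0" and index: "matpow U m \<noteq> 0"
  shows "algebraic_of_degree U (Suc m)"
  unfolding algebraic_of_degree_def
proof (intro conjI allI impI)
  show "\<exists>f::'a poly. f \<noteq> 0 \<and> degree f = Suc m \<and> poly_mat f U = 0"
    using nil by (intro exI[of _ "monom 1 (Suc m)"]) (simp add: poly_mat_monom degree_monom_eq)
next
  fix g :: "'a poly"
  assume g: "g \<noteq> 0 \<and> degree g < Suc m"
  define i0 where "i0 = (LEAST i. coeff g i \<noteq> 0)"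
  have "coeff g (degree g) \<noteq> 0"
    using g by simp
  then have c0: "coeff g i0 \<noteq> 0" and i0_le: "i0 \<le> degree g"
    unfolding i0_def by (fact LeastI, fact Least_le)
  \<comment> \<open>multiplying by U^(m - i0) kills every term of g(U) except the lowest one\<close>
  have "poly_mat g U ** matpow U (m - i0) = mat (coeff g i0) ** matpow U (i0 + (m - i0))"
    unfolding poly_mat_mult_matpow
  proof (rule sum_eq_single)
    fix i assume i: "i \<in> {..degree g}" "i \<noteq> i0"
    show "mat (coeff g i) ** matpow U (i + (m - i0)) = 0"
    proof (cases "i < i0")
      case True
      then show ?thesis
        using not_less_Least[of i "\<lambda>i. coeff g i \<noteq> 0"] by (simp add: i0_def)
    next
      case False
      then have "Suc m \<le> i + (m - i0)"
        using i g by simp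
      then show ?thesis
        using matpow_eq_0_mono[OF nil] by simp
    qed
  qed (use i0_le in auto)
  also have "\<dots> \<noteq> 0"
  proof -
    obtain a b where "matpow U m $ a $ b \<noteq> 0"
      using index by (auto simp: vec_eq_iff)
    then show ?thesis
      using c0 i0_le g by (auto simp: vec_eq_iff mat_eq_diag_mat diag_mat_mult_nth)
  qed
  finally show "poly_mat g U \<noteq> 0"
    by auto
qed

locale index_enumeration =
  fixes pos :: "'n::finite \<Rightarrow> nat"
  assumes bij_pos: "bij_betw pos UNIV {..<CARD('n)}"
begin

lemma pos_eq_iff [simp]: "pos i = pos j \<longleftrightarrow> i = j"
  using bij_pos by (auto simp: bij_betw_def dest: injD)

lemma pos_less_card: "pos i < CARD('n)"
  using bij_betw_apply[OF bij_pos] by simp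

lemma ex_pos_eq:
  assumes "m < CARD('n)"
  obtains i where "pos i = m"
proof -
  have "m \<in> range pos"
    using assms bij_pos by (simp add: bij_betw_def)
  then show ?thesis
    using that by blast
qed

lemma pos_predE:
  assumes "pos j = Suc m"
  obtains k where "pos j = Suc (pos k)"
proof -
  have "m < CARD('n)"
    using pos_less_card[of j] assms by simp
  then obtain k where "pos k = m"
    by (rule ex_pos_eq)
  with assms show ?thesis
    by (intro that[of k]) simp
qed

lemma matpow_strictly_upper_nth_eq_0:
  fixes U :: "'a::semiring_1^'n^'n"
  assumes upper: "\<And>i j. U $ i $ j \<noteq> 0 \<Longrightarrow> pos i < pos j"
  shows "pos b < pos a + k \<Longrightarrow> matpow U k $ a $ b = 0"
proof (induction k arbitrary: a)
  case (Suc k)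
  have "U $ a $ l * matpow U k $ l $ b = 0" for l
    using upper[of a l] Suc.prems Suc.IH[of l] by (cases "U $ a $ l = 0") auto
  then show ?case
    by (simp add: matrix_matrix_mult_nth)
qed (auto simp: mat_def)

lemma matpow_strictly_upper_nth_neq_0:
  fixes U :: "'a::{semiring_1, semiring_no_zero_divisors}^'n^'n"
  assumes upper: "\<And>i j. U $ i $ j \<noteq> 0 \<Longrightarrow> pos i < pos j"
    and superdiag: "\<And>i j. pos j = Suc (pos i) \<Longrightarrow> U $ i $ j \<noteq> 0"
  shows "pos b = pos a + k \<Longrightarrow> matpow U k $ a $ b \<noteq> 0"
proof (induction k arbitrary: a)
  case (Suc k)
  have "Suc (pos a) < CARD('n)"
    using pos_less_card[of b] Suc.prems by simp
  then obtain l where l: "pos l = Suc (pos a)"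
    by (rule ex_pos_eq)
  \<comment> \<open>a path of length Suc k from a to b must pass through l first\<close>
  have "matpow U (Suc k) $ a $ b = U $ a $ l * matpow U k $ l $ b"
    unfolding matpow.simps matrix_matrix_mult_nth
  proof (rule sum_eq_single)
    fix l' assume "l' \<noteq> l"
    then have "pos l' \<noteq> pos l"
      by simp
    then have "U $ a $ l' = 0 \<or> pos b < pos l' + k"
      using upper[of a l'] l Suc.prems by (cases "pos a < pos l'") auto
    then show "U $ a $ l' * matpow U k $ l' $ b = 0"
      using matpow_strictly_upper_nth_eq_0[OF upper] by auto
  qed auto
  also have "\<dots> \<noteq> 0"
    using superdiag[OF l] Suc.IH[of l] l Suc.prems by simp
  finally show ?case .
qed (simp add: mat_def)

lemma algebraic_of_degree_strictly_upper:
  fixes U :: "'a::field^'n^'n"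
  assumes upper: "\<And>i j. U $ i $ j \<noteq> 0 \<Longrightarrow> pos i < pos j"
    and superdiag: "\<And>i j. pos j = Suc (pos i) \<Longrightarrow> U $ i $ j \<noteq> 0"
  shows "algebraic_of_degree U CARD('n)"
proof -
  obtain m where m: "CARD('n) = Suc m"
    using not0_implies_Suc[of "CARD('n)"] by auto
  have "matpow U (Suc m) $ a $ b = 0" for a b
  proof (rule matpow_strictly_upper_nth_eq_0[OF upper])
    have "pos b < Suc m"
      using pos_less_card[of b] by (simp only: m)
    then show "pos b < pos a + Suc m"
      by linarith
  qed
  then have "matpow U (Suc m) = 0"
    by (simp add: vec_eq_iff)
  moreover obtain a where "pos a = 0"
    by (rule ex_pos_eq[of 0]) (simp add: m)
  moreover obtain b where "pos b = m"
    by (rule ex_pos_eq[of m]) (simp add: m)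
  ultimately have "matpow U m \<noteq> 0"
    using matpow_strictly_upper_nth_neq_0[OF upper superdiag, of b a m] by (auto simp: vec_eq_iff)
  with \<open>matpow U (Suc m) = 0\<close> show ?thesis
    unfolding m by (rule algebraic_of_degree_nilpotent)
qed

definition shift_mat :: "'a::zero_neq_one^'n^'n" where
  "shift_mat = (\<chi> i j. if pos j = Suc (pos i) then 1 else 0)"

lemma matrix_mult_shift_mat_nth:
  fixes X :: "'a::semiring_1^'n^'m"
  assumes "pos j = Suc (pos k)"
  shows "(X ** shift_mat) $ i $ j = X $ i $ k"
  unfolding matrix_matrix_mult_nth using assms
  by (subst sum_eq_single[of _ k]) (auto simp: shift_mat_def)

lemma matrix_mult_shift_mat_nth_0:
  fixes X :: "'a::semiring_1^'n^'m"
  assumes "pos j = 0"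
  shows "(X ** shift_mat) $ i $ j = 0"
  using assms by (simp add: matrix_matrix_mult_nth shift_mat_def)

definition unipotent_shift :: "'a::semiring_1^'n^'n" where
  "unipotent_shift = mat 1 + shift_mat"

definition unipotent_shift_inv :: "'a::ring_1^'n^'n" where
  "unipotent_shift_inv = (\<chi> i j. if pos i \<le> pos j then (-1) ^ (pos j - pos i) else 0)"

lemma unipotent_shift_inv_mult: "unipotent_shift_inv ** unipotent_shift = mat 1"
proof -
  let ?C = "unipotent_shift_inv :: 'a^'n^'n"
  have "?C $ i $ j + (?C ** shift_mat) $ i $ j = mat 1 $ i $ j" for i j
  proof (cases "pos j")
    case 0
    then show ?thesis
      using matrix_mult_shift_mat_nth_0[of j ?C] pos_eq_iff[of i j]
      by (auto simp: unipotent_shift_inv_def mat_def)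
  next
    case (Suc m)
    then obtain k where k: "pos j = Suc (pos k)"
      by (rule pos_predE)
    show ?thesis
    proof (cases "pos i \<le> pos k")
      case True
      then have "pos j - pos i = Suc (pos k - pos i)"
        using k by simp
      \<comment> \<open>consecutive entries of a row have opposite signs\<close>
      then show ?thesis
        using True k matrix_mult_shift_mat_nth[OF k, of ?C] by (auto simp: unipotent_shift_inv_def mat_def)
    next
      case False
      then show ?thesis
        using k matrix_mult_shift_mat_nth[OF k, of ?C] pos_eq_iff[of i j]
        by (auto simp: unipotent_shift_inv_def mat_def)
    qed
  qed
  then show ?thesis
    by (simp add: vec_eq_iff unipotent_shift_def matrix_add_ldistrib)
qed

lemma unipotent_shift_mult_inv:
  "unipotent_shift ** unipotent_shift_inv = (mat 1 :: 'a::field^'n^'n)"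
  using unipotent_shift_inv_mult matrix_left_right_inverse by blast

lemma diag_mat_minus_similar_strictly_upper:
  fixes e :: "'n \<Rightarrow> 'a::ring_1"
  defines "M \<equiv> diag_mat e - unipotent_shift_inv ** diag_mat e ** unipotent_shift"
  assumes "M $ i $ j \<noteq> 0"
  shows "pos i < pos j"
proof (rule ccontr)
  let ?C = "unipotent_shift_inv :: 'a^'n^'n"
  assume le: "\<not> pos i < pos j"
  have "(?C ** diag_mat e ** shift_mat) $ i $ j = 0"
  proof (cases "pos j")
    case 0
    then show ?thesis
      by (rule matrix_mult_shift_mat_nth_0)
  next
    case (Suc m)
    then obtain k where k: "pos j = Suc (pos k)"
      by (rule pos_predE)
    then show ?thesis
      using le by (simp add: matrix_mult_shift_mat_nth matrix_mult_diag_mat_nth unipotent_shift_inv_def)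
  qed
  then have "M $ i $ j = 0"
    using le pos_eq_iff[of i j]
    by (auto simp: M_def unipotent_shift_def matrix_add_ldistrib matrix_mult_diag_mat_nth
        unipotent_shift_inv_def)
  with assms show False
    by simp
qed

lemma diag_mat_minus_similar_superdiag:
  fixes e :: "'n \<Rightarrow> 'a::ring_1"
  assumes "pos j = Suc (pos i)"
  shows "(diag_mat e - unipotent_shift_inv ** diag_mat e ** unipotent_shift) $ i $ j = e j - e i"
  using assms pos_eq_iff[of i j]
  by (simp add: unipotent_shift_def matrix_add_ldistrib matrix_mult_shift_mat_nth
      matrix_mult_diag_mat_nth unipotent_shift_inv_def)

end

lemma ex_poly_neq:
  fixes p :: "'a::idom poly"
  assumes "infinite (UNIV :: 'a set)" "degree p \<noteq> 0"
  shows "\<exists>x. poly p x \<noteq> poly p c"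
proof -
  have "p \<noteq> [:poly p c:]"
    using assms(2) degree_pCons_0 by metis
  then have "finite {x. poly (p - [:poly p c:]) x = 0}"
    by (intro poly_roots_finite) simp
  then obtain x where "x \<notin> {x. poly (p - [:poly p c:]) x = 0}"
    using ex_new_if_finite[OF assms(1)] by blast
  then show ?thesis
    by auto
qed

theorem lemma2p8:
  fixes p :: "'a::field poly"
  assumes "infinite (UNIV :: 'a set)"
    and "CARD('n::finite) \<ge> 2"
    and "degree p \<ge> 1"
  shows "\<exists>A B :: 'a^'n^'n.
           algebraic_of_degree (poly_mat p (A ** B) - poly_mat p (B ** A)) CARD('n)"
proof -
  obtain pos :: "'n \<Rightarrow> nat" where "bij_betw pos UNIV {..<CARD('n)}"
    using ex_bij_betw_finite_nat[of "UNIV :: 'n set"] by (auto simp: atLeast0LessThan)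
  then interpret index_enumeration pos
    by unfold_locales
  obtain x where x: "poly p x \<noteq> poly p 0"
    using ex_poly_neq[OF assms(1)] assms(3) by (metis not_one_le_zero)
  define d where "d i = (if even (pos i) then x else 0)" for i
  define e where "e = poly p \<circ> d"
  define A :: "'a^'n^'n" where "A = unipotent_shift"
  define B where "B = unipotent_shift_inv ** diag_mat d"
  have "A ** B = diag_mat d"
    by (simp add: A_def B_def matrix_mul_assoc unipotent_shift_mult_inv)
  moreover have "B ** A = unipotent_shift_inv ** diag_mat d ** A"
    by (simp add: B_def)
  ultimately have diff: "poly_mat p (A ** B) - poly_mat p (B ** A)
      = diag_mat e - unipotent_shift_inv ** diag_mat e ** unipotent_shift"
    by (simp add: A_def e_def poly_mat_similar unipotent_shift_inv_mult unipotent_shift_mult_inv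
        poly_mat_diag_mat comp_def)
  have "(diag_mat e - unipotent_shift_inv ** diag_mat e ** unipotent_shift) $ i $ j \<noteq> 0"
    if "pos j = Suc (pos i)" for i j
    unfolding diag_mat_minus_similar_superdiag[OF that] using that x by (auto simp: e_def d_def)
  then have "algebraic_of_degree (poly_mat p (A ** B) - poly_mat p (B ** A)) CARD('n)"
    unfolding diff
    by (intro algebraic_of_degree_strictly_upper diag_mat_minus_similar_strictly_upper)
  then show ?thesis
    by blast
qed

end
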